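(* Let $T$ be a Fano tetrahedron in $\mathbb{Z}^3$ with vertices $x_1=(1,0,0)$, $x_2=(0,1,0)$, $x_3=(k''\lambda_4-a\lambda_1,\ k'\lambda_4-a\lambda_2,\ k\lambda_4)$, $x_4=(-k''\lambda_3-b\lambda_1,\ -k'\lambda_3-b\lambda_2,\ -k\lambda_3)$, where $\lambda_1\le\cdots\le\lambda_4$ are non-negative integers with $\gcd(\lambda_1,\ldots,\lambda_4)=1$ and $\sum_i\lambda_ix_i=0$, $a,b\in\mathbb{Z}$ with $a>0$ and $a\lambda_3+b\lambda_4=1$, and $k,k',k''\in\mathbb{N}$ with $0\le k''\lambda_4-a\lambda_1<k\lambda_4$ and $0\le k'\lambda_4-a\lambda_2<k\lambda_4$. Then $$0\le k\lambda_3-k''\lambda_3-b\lambda_1<k\lambda_3\quad\text{and}\quad 0\le k\lambda_3-k'\lambda_3-b\lambda_2<k\lambda_3,$$ and one of these lower inequalities is an equality only if $\lambda_3=1$; in that case $T$ is equivalent under $GL(3,\mathbb{Z})$ either to the tetrahedron with vertices $e_1,e_2,e_3,-e_1-e_2-e_3$ or to the tetrahedron with vertices $(1,0,0),(0,1,0),(1,1,2),(-1,-1,-1)$.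
   Context: A tetrahedron is called Fano if its vertices lie in $\mathbb{Z}^3$ and the only lattice point it contains other than its vertices is the origin, which lies strictly in its interior. $e_1,e_2,e_3$ is the standard basis of $\mathbb{Z}^3$. *)

theory Defs
  imports "HOL-Analysis.Analysis"
begin

definition ipt :: "int \<Rightarrow> int \<Rightarrow> int \<Rightarrow> real^3" where
  "ipt a b c = vector [real_of_int a, real_of_int b, real_of_int c]"

definition lattice_point :: "real^3 \<Rightarrow> bool" where
  "lattice_point x \<longleftrightarrow> (\<forall>i. x $ i \<in> \<int>)"

definition fano_tetrahedron :: "real^3 \<Rightarrow> real^3 \<Rightarrow> real^3 \<Rightarrow> real^3 \<Rightarrow> bool" where
  "fano_tetrahedron v1 v2 v3 v4 \<longleftrightarrow>
     lattice_point v1 \<and> lattice_point v2 \<and> lattice_point v3 \<and> lattice_point v4 \<and>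
     card {v1, v2, v3, v4} = 4 \<and> \<not> affine_dependent {v1, v2, v3, v4} \<and>
     0 \<in> interior (convex hull {v1, v2, v3, v4}) \<and>
     {x \<in> convex hull {v1, v2, v3, v4}. lattice_point x} = {v1, v2, v3, v4, 0}"

definition GL3Z_equiv :: "(real^3) set \<Rightarrow> (real^3) set \<Rightarrow> bool" where
  "GL3Z_equiv S S' \<longleftrightarrow>
     (\<exists>A :: real^3^3. (\<forall>i j. A $ i $ j \<in> \<int>) \<and> \<bar>det A\<bar> = 1 \<and> (\<lambda>x. A *v x) ` S = S')"

end

theory Submission
  imports Defs
begin

(* Write the tetrahedron as e1, e2, x3 = (p1, p2, k l4), x4 = (r1, r2, -k l3), so that the quantities
   to be bounded are k l3 + r1 and k l3 + r2. Since the origin is interior, no nonzero linear form is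
   nonnegative on all four vertices; the form (k l3, 0, r1) vanishes on e2 and x4, so it is negative
   on x3, which gives r1 < 0. The bound -r1 <= k l3 is the first coordinate of the barycentric
   relation l1 e1 + l2 e2 + l3 x3 + l4 x4 = 0. If r1 = -k l3, then (m e2 + x4) / (k l3) with
   m = -r2 mod k l3 is a lattice point of the tetrahedron at height -1, which forces k l3 = 1.
   The barycentric relation then gives x3 = (l4 - 1, l4 - 1, l4) and x4 = (-1, -1, -1), and the
   lattice point (e1 + e2 + x3) / l4 = (1, 1, 1) shows l4 <= 2. *)

lemma ipt_nth [simp]:
  "ipt a b c $ 1 = of_int a" "ipt a b c $ 2 = of_int b" "ipt a b c $ 3 = of_int c"
  by (simp_all add: ipt_def)

lemma ipt_eq_iff [simp]: "ipt a b c = ipt a' b' c' \<longleftrightarrow> a = a' \<and> b = b' \<and> c = c'"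
  by (simp add: vec_eq_iff forall_3)

lemma ipt_eq_zero_iff [simp]: "ipt a b c = 0 \<longleftrightarrow> a = 0 \<and> b = 0 \<and> c = 0"
  by (simp add: vec_eq_iff forall_3)

lemma ipt_add: "ipt a b c + ipt a' b' c' = ipt (a + a') (b + b') (c + c')"
  by (simp add: vec_eq_iff forall_3)

lemma scaleR_ipt: "of_int t *\<^sub>R ipt a b c = ipt (t * a) (t * b) (t * c)"
  by (simp add: vec_eq_iff forall_3)

lemma inner_ipt: "ipt a b c \<bullet> ipt a' b' c' = of_int (a * a' + b * b' + c * c')"
  by (simp add: inner_vec_def sum_3)

lemma lattice_point_ipt: "lattice_point (ipt a b c)"
  by (simp add: lattice_point_def forall_3)

lemma GL3Z_equiv_refl: "GL3Z_equiv S S"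
  unfolding GL3Z_equiv_def
proof (intro exI[of _ "mat 1"] conjI)
  show "\<forall>i j. (mat 1 :: real^3^3) $ i $ j \<in> \<int>"
    by (simp add: mat_def)
qed (simp_all add: det_I)

lemma interior_subset_halfspace_eq_zero:
  fixes c :: "'a::euclidean_space"
  assumes "0 \<in> interior S" "S \<subseteq> {x. 0 \<le> c \<bullet> x}"
  shows "c = 0"
proof (rule ccontr)
  assume "c \<noteq> 0"
  have "interior S \<subseteq> interior {x. 0 \<le> c \<bullet> x}"
    using assms(2) by (rule interior_mono)
  also have "\<dots> = {x. 0 < c \<bullet> x}"
    using \<open>c \<noteq> 0\<close> by (rule interior_halfspace_ge)
  finally show False
    using assms(1) by auto
qed

lemma convex_scaled_combination_mem:
  fixes H :: "'a::real_vector set"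
  assumes "convex H" "0 \<in> H" "u \<in> H" "v \<in> H" "w \<in> H"
    and "0 \<le> \<alpha>" "0 \<le> \<beta>" "0 \<le> \<gamma>" "\<alpha> + \<beta> + \<gamma> \<le> t" "0 < t"
    and "t *\<^sub>R z = \<alpha> *\<^sub>R u + \<beta> *\<^sub>R v + \<gamma> *\<^sub>R w"
  shows "z \<in> H"
proof -
  define c :: "nat \<Rightarrow> real"
    where "c = (\<lambda>i. [1 - (\<alpha> + \<beta> + \<gamma>) / t, \<alpha> / t, \<beta> / t, \<gamma> / t] ! i)"
  define y where "y = (\<lambda>i. [0, u, v, w] ! i)"
  have "(\<Sum>i\<in>{0, 1, 2, 3}. c i *\<^sub>R y i) \<in> H"
  proof (rule convex_sum)
    show "sum c {0, 1, 2, 3} = 1"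
      using assms(10) by (simp add: c_def field_simps)
    show "c i \<ge> 0" if "i \<in> {0, 1, 2, 3}" for i
      using that assms(6-10) by (auto simp: c_def field_simps)
    show "y i \<in> H" if "i \<in> {0, 1, 2, 3}" for i
      using that assms(2-5) by (auto simp: y_def)
  qed (use assms(1) in auto)
  moreover have "z = (\<Sum>i\<in>{0, 1, 2, 3}. c i *\<^sub>R y i)"
    using arg_cong[OF assms(11), of "scaleR (1 / t)"] assms(10)
    by (simp add: c_def y_def scaleR_right_distrib)
  ultimately show ?thesis
    by simp
qed

lemma fano_tetrahedron_halfspace:
  assumes "fano_tetrahedron v1 v2 v3 v4"
    and "0 \<le> c \<bullet> v1" "0 \<le> c \<bullet> v2" "0 \<le> c \<bullet> v3" "0 \<le> c \<bullet> v4"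
  shows "c = 0"
proof (rule interior_subset_halfspace_eq_zero)
  show "0 \<in> interior (convex hull {v1, v2, v3, v4})"
    using assms(1) by (simp add: fano_tetrahedron_def)
  show "convex hull {v1, v2, v3, v4} \<subseteq> {x. 0 \<le> c \<bullet> x}"
    by (rule hull_minimal) (use assms(2-5) convex_halfspace_ge in auto)
qed

lemma fano_tetrahedron_lattice_point:
  assumes "fano_tetrahedron v1 v2 v3 v4"
    and "z \<in> convex hull {v1, v2, v3, v4}" "lattice_point z"
  shows "z \<in> {v1, v2, v3, v4, 0}"
  using assms unfolding fano_tetrahedron_def by blast

lemma fano_tetrahedron_convex_combination_mem:
  assumes "fano_tetrahedron v1 v2 v3 v4"
    and "u \<in> {v1, v2, v3, v4}" "v \<in> {v1, v2, v3, v4}" "w \<in> {v1, v2, v3, v4}"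
    and "0 \<le> \<alpha>" "0 \<le> \<beta>" "0 \<le> \<gamma>" "\<alpha> + \<beta> + \<gamma> \<le> t" "0 < t"
    and "t *\<^sub>R z = \<alpha> *\<^sub>R u + \<beta> *\<^sub>R v + \<gamma> *\<^sub>R w"
  shows "z \<in> convex hull {v1, v2, v3, v4}"
proof (rule convex_scaled_combination_mem[OF convex_convex_hull _ _ _ _ assms(5-10)])
  show "0 \<in> convex hull {v1, v2, v3, v4}"
    using assms(1) interior_subset unfolding fano_tetrahedron_def by blast
qed (use assms(2-4) in \<open>auto intro: hull_inc\<close>)

context
  fixes p1 p2 h r1 r2 n :: int
  assumes fano: "fano_tetrahedron (ipt 1 0 0) (ipt 0 1 0) (ipt p1 p2 h) (ipt r1 r2 (- n))"
    and height_pos: "0 < h"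
begin

lemma fano_normal_depth_pos: "0 < n"
proof (rule ccontr)
  assume "\<not> 0 < n"
  then have "ipt 0 0 1 = 0"
    using height_pos by (intro fano_tetrahedron_halfspace[OF fano]) (simp_all add: inner_ipt)
  then show False
    by simp
qed

lemma fano_normal_slopes: "n * p1 + h * r1 < 0" "n * p2 + h * r2 < 0"
proof -
  have "ipt n 0 r1 = 0" if "0 \<le> n * p1 + h * r1"
    using that fano_normal_depth_pos
    by (intro fano_tetrahedron_halfspace[OF fano])
      (simp_all add: inner_ipt algebra_simps flip: of_int_mult of_int_add)
  then show "n * p1 + h * r1 < 0"
    using fano_normal_depth_pos by fastforce
  have "ipt 0 n r2 = 0" if "0 \<le> n * p2 + h * r2"
    using that fano_normal_depth_pos
    by (intro fano_tetrahedron_halfspace[OF fano])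
      (simp_all add: inner_ipt algebra_simps flip: of_int_mult of_int_add)
  then show "n * p2 + h * r2 < 0"
    using fano_normal_depth_pos by fastforce
qed

lemma fano_normal_lattice_point_depth_one:
  assumes "ipt x y (-1) \<in> convex hull {ipt 1 0 0, ipt 0 1 0, ipt p1 p2 h, ipt r1 r2 (- n)}"
  shows "n = 1"
  using fano_tetrahedron_lattice_point[OF fano assms lattice_point_ipt] height_pos by auto

lemma fano_normal_edge_apex:
  assumes "r1 = - n \<or> r2 = - n"
  shows "n = 1"
  using assms
proof
  assume "r1 = - n"
  define d m where "d = (- r2) div n" and "m = (- r2) mod n"
  have "- r2 = n * d + m" "0 \<le> m" "m < n"
    using fano_normal_depth_pos by (simp_all add: d_def m_def)
  then have "ipt (-1) (- d) (-1) \<in> convex hull {ipt 1 0 0, ipt 0 1 0, ipt p1 p2 h, ipt r1 r2 (- n)}"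
    using \<open>r1 = - n\<close>
    by (intro fano_tetrahedron_convex_combination_mem[OF fano, of "ipt 0 1 0" "ipt r1 r2 (- n)"
          "ipt r1 r2 (- n)" "of_int m" 1 0 "of_int n"])
      (simp_all add: scaleR_ipt ipt_add algebra_simps)
  then show "n = 1"
    by (rule fano_normal_lattice_point_depth_one)
next
  assume "r2 = - n"
  define d m where "d = (- r1) div n" and "m = (- r1) mod n"
  have "- r1 = n * d + m" "0 \<le> m" "m < n"
    using fano_normal_depth_pos by (simp_all add: d_def m_def)
  then have "ipt (- d) (-1) (-1) \<in> convex hull {ipt 1 0 0, ipt 0 1 0, ipt p1 p2 h, ipt r1 r2 (- n)}"
    using \<open>r2 = - n\<close>
    by (intro fano_tetrahedron_convex_combination_mem[OF fano, of "ipt 1 0 0" "ipt r1 r2 (- n)"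
          "ipt r1 r2 (- n)" "of_int m" 1 0 "of_int n"])
      (simp_all add: scaleR_ipt ipt_add algebra_simps)
  then show "n = 1"
    by (rule fano_normal_lattice_point_depth_one)
qed

lemma fano_normal_height_le_two:
  assumes "p1 = h - 1" "p2 = h - 1"
  shows "h \<le> 2"
proof (rule ccontr)
  assume "\<not> h \<le> 2"
  then have "ipt 1 1 1 \<in> convex hull {ipt 1 0 0, ipt 0 1 0, ipt p1 p2 h, ipt r1 r2 (- n)}"
    using assms
    by (intro fano_tetrahedron_convex_combination_mem[OF fano, of "ipt 1 0 0" "ipt 0 1 0"
          "ipt p1 p2 h" 1 1 1 "of_int h"])
      (simp_all add: scaleR_ipt ipt_add)
  then show False
    using fano_tetrahedron_lattice_point[OF fano _ lattice_point_ipt] fano_normal_depth_pos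
      \<open>\<not> h \<le> 2\<close>
    by fastforce
qed

end

context
  fixes p1 p2 r1 r2 k l1 l2 l3 l4 :: int
  assumes fano: "fano_tetrahedron (ipt 1 0 0) (ipt 0 1 0) (ipt p1 p2 (k * l4)) (ipt r1 r2 (- (k * l3)))"
    and p_bounds: "0 \<le> p1" "p1 < k * l4" "0 \<le> p2" "p2 < k * l4"
    and weights: "0 \<le> k" "0 \<le> l1" "l1 \<le> l2" "l2 \<le> l3"
    and barycentric: "l1 + l3 * p1 + l4 * r1 = 0" "l2 + l3 * p2 + l4 * r2 = 0"
begin

lemma fano_weighted_height_pos: "0 < k * l4"
  using p_bounds by linarith

lemma fano_weighted_pos: "0 < k" "0 < l3" "0 < l4"
  using fano_normal_depth_pos[OF fano fano_weighted_height_pos] fano_weighted_height_pos weights(1)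
  by (auto simp: zero_less_mult_iff)

lemma fano_weighted_apex_bounds: "- (k * l3) \<le> r1" "r1 < 0" "- (k * l3) \<le> r2" "r2 < 0"
proof -
  note slopes = fano_normal_slopes[OF fano fano_weighted_height_pos]
  have "0 \<le> k * l3 * p1" "0 \<le> k * l3 * p2"
    using fano_weighted_pos p_bounds by simp_all
  then have "k * l4 * r1 < 0" "k * l4 * r2 < 0"
    using slopes by linarith+
  then show "r1 < 0" "r2 < 0"
    using fano_weighted_pos by (auto simp: mult_less_0_iff)
  have "l3 * p1 \<le> l3 * (k * l4 - 1)" "l3 * p2 \<le> l3 * (k * l4 - 1)"
    using p_bounds fano_weighted_pos by simp_all
  then have "l4 * - r1 \<le> l4 * (k * l3)" "l4 * - r2 \<le> l4 * (k * l3)"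
    using barycentric weights by (simp_all add: algebra_simps)
  then have "- r1 \<le> k * l3" "- r2 \<le> k * l3"
    using fano_weighted_pos(3) mult_left_le_imp_le by blast+
  then show "- (k * l3) \<le> r1" "- (k * l3) \<le> r2"
    by linarith+
qed

lemma fano_weighted_equality_case:
  assumes "r1 = - (k * l3) \<or> r2 = - (k * l3)"
  shows "l3 = 1 \<and>
    (convex hull {ipt 1 0 0, ipt 0 1 0, ipt p1 p2 (k * l4), ipt r1 r2 (- (k * l3))}
       = convex hull {ipt 1 0 0, ipt 0 1 0, ipt 0 0 1, ipt (-1) (-1) (-1)} \<or>
     convex hull {ipt 1 0 0, ipt 0 1 0, ipt p1 p2 (k * l4), ipt r1 r2 (- (k * l3))}
       = convex hull {ipt 1 0 0, ipt 0 1 0, ipt 1 1 2, ipt (-1) (-1) (-1)})"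
proof -
  have "k * l3 = 1"
    by (rule fano_normal_edge_apex[OF fano fano_weighted_height_pos assms])
  then have k: "k = 1" and l3: "l3 = 1"
    using fano_weighted_pos by (simp_all add: pos_zmult_eq_1_iff)
  have "l4 * - r1 \<le> l4 * 1" "l4 * - r2 \<le> l4 * 1"
    using barycentric p_bounds weights k l3 by simp_all
  then have "- r1 \<le> 1" "- r2 \<le> 1"
    using fano_weighted_pos(3) mult_left_le_imp_le by blast+
  then have r: "r1 = -1" "r2 = -1"
    using fano_weighted_apex_bounds by linarith+
  then have p: "p1 = l4 - 1" "p2 = l4 - 1"
    using barycentric p_bounds weights k l3 by simp_all
  have "k * l4 \<le> 2"
    using p k by (intro fano_normal_height_le_two[OF fano fano_weighted_height_pos]) simp_all
  then have "l4 = 1 \<or> l4 = 2"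
    using k fano_weighted_pos(3) by simp presburger
  then show ?thesis
    using k l3 p r by auto
qed

end

theorem proposition3p5:
  fixes l1 l2 l3 l4 a b k k' k'' :: int
  assumes "0 \<le> l1" "l1 \<le> l2" "l2 \<le> l3" "l3 \<le> l4"
    and "gcd l1 (gcd l2 (gcd l3 l4)) = 1"
    and "0 \<le> k" "0 \<le> k'" "0 \<le> k''"
    and "a > 0" "a * l3 + b * l4 = 1"
    and "0 \<le> k'' * l4 - a * l1" "k'' * l4 - a * l1 < k * l4"
    and "0 \<le> k' * l4 - a * l2" "k' * l4 - a * l2 < k * l4"
    and "real_of_int l1 *\<^sub>R ipt 1 0 0 + real_of_int l2 *\<^sub>R ipt 0 1 0
         + real_of_int l3 *\<^sub>R ipt (k'' * l4 - a * l1) (k' * l4 - a * l2) (k * l4)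
         + real_of_int l4 *\<^sub>R ipt (- k'' * l3 - b * l1) (- k' * l3 - b * l2) (- k * l3) = 0"
    and "fano_tetrahedron (ipt 1 0 0) (ipt 0 1 0)
           (ipt (k'' * l4 - a * l1) (k' * l4 - a * l2) (k * l4))
           (ipt (- k'' * l3 - b * l1) (- k' * l3 - b * l2) (- k * l3))"
  shows "0 \<le> k * l3 - k'' * l3 - b * l1 \<and> k * l3 - k'' * l3 - b * l1 < k * l3
       \<and> 0 \<le> k * l3 - k' * l3 - b * l2 \<and> k * l3 - k' * l3 - b * l2 < k * l3
       \<and> ((k * l3 - k'' * l3 - b * l1 = 0 \<or> k * l3 - k' * l3 - b * l2 = 0) \<longrightarrow>
            l3 = 1 \<and>
            (GL3Z_equiv
               (convex hull {ipt 1 0 0, ipt 0 1 0,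
                  ipt (k'' * l4 - a * l1) (k' * l4 - a * l2) (k * l4),
                  ipt (- k'' * l3 - b * l1) (- k' * l3 - b * l2) (- k * l3)})
               (convex hull {ipt 1 0 0, ipt 0 1 0, ipt 0 0 1, ipt (-1) (-1) (-1)})
             \<or> GL3Z_equiv
               (convex hull {ipt 1 0 0, ipt 0 1 0,
                  ipt (k'' * l4 - a * l1) (k' * l4 - a * l2) (k * l4),
                  ipt (- k'' * l3 - b * l1) (- k' * l3 - b * l2) (- k * l3)})
               (convex hull {ipt 1 0 0, ipt 0 1 0, ipt 1 1 2, ipt (-1) (-1) (-1)})))"
proof -
  define p1 p2 r1 r2
    where "p1 = k'' * l4 - a * l1" and "p2 = k' * l4 - a * l2"
      and "r1 = - k'' * l3 - b * l1" and "r2 = - k' * l3 - b * l2"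
  have fano: "fano_tetrahedron (ipt 1 0 0) (ipt 0 1 0) (ipt p1 p2 (k * l4)) (ipt r1 r2 (- (k * l3)))"
    using assms(16) by (simp add: p1_def p2_def r1_def r2_def)
  have p_bounds: "0 \<le> p1" "p1 < k * l4" "0 \<le> p2" "p2 < k * l4"
    using assms(11-14) by (simp_all add: p1_def p2_def)
  (* Of the hypotheses on l1, ..., l4, a, b, k' and k'', only 0 <= l1 <= l2 <= l3 and the
     barycentric relation are used. *)
  have barycentric: "l1 + l3 * p1 + l4 * r1 = 0" "l2 + l3 * p2 + l4 * r2 = 0"
    using assms(15) unfolding scaleR_ipt ipt_add ipt_eq_zero_iff
    by (simp_all add: p1_def p2_def r1_def r2_def algebra_simps)
  note apex_bounds = fano_weighted_apex_bounds[OF fano p_bounds assms(6,1,2,3) barycentric]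
  note equality_case = fano_weighted_equality_case[OF fano p_bounds assms(6,1,2,3) barycentric]
  have "k * l3 - k'' * l3 - b * l1 = k * l3 + r1" "k * l3 - k' * l3 - b * l2 = k * l3 + r2"
    by (simp_all add: r1_def r2_def)
  moreover have "convex hull {ipt 1 0 0, ipt 0 1 0, ipt (k'' * l4 - a * l1) (k' * l4 - a * l2) (k * l4),
      ipt (- k'' * l3 - b * l1) (- k' * l3 - b * l2) (- k * l3)}
    = convex hull {ipt 1 0 0, ipt 0 1 0, ipt p1 p2 (k * l4), ipt r1 r2 (- (k * l3))}"
    by (simp add: p1_def p2_def r1_def r2_def)
  ultimately show ?thesis
    using apex_bounds equality_case GL3Z_equiv_refl by auto
qed

end
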